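(* Any two butterfly algebras are isometric and isomorphic as Lie algebras; that is, for any two butterfly algebras there is a Lie algebra isomorphism between them which is an isometry of the invariant bilinear forms.
   Context: A butterfly algebra is a real 2-step nilpotent Lie algebra $\mathfrak{b}_6$ (i.e. $[\mathfrak{b}_6,[\mathfrak{b}_6,\mathfrak{b}_6]]=0$) of dimension $6$, endowed with a symmetric bilinear form $(\cdot,\cdot)$ that is invariant, i.e. $([X,Y],Z)=-(Y,[X,Z])$ for all $X,Y,Z$, such that there exists $Z\in[\mathfrak{b}_6,\mathfrak{b}_6]$ not lying in the radical $\mathfrak{r}=\{X\in\mathfrak{b}_6\mid (X,\mathfrak{b}_6)=0\}$. *)

theory Defs
  imports "HOL-Analysis.Analysis"
begin

definition lie_bracket :: "('a::real_vector \<Rightarrow> 'a \<Rightarrow> 'a) \<Rightarrow> bool" where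
  "lie_bracket br \<longleftrightarrow> bilinear br \<and> (\<forall>x. br x x = 0) \<and>
     (\<forall>x y z. br x (br y z) + br y (br z x) + br z (br x y) = 0)"

definition derived_alg :: "('a::real_vector \<Rightarrow> 'a \<Rightarrow> 'a) \<Rightarrow> 'a set" where
  "derived_alg br = span {br x y | x y. True}"

definition two_step_nilpotent :: "('a::real_vector \<Rightarrow> 'a \<Rightarrow> 'a) \<Rightarrow> bool" where
  "two_step_nilpotent br \<longleftrightarrow> (\<forall>x. \<forall>w\<in>derived_alg br. br x w = 0)"

definition invariant_form ::
  "('a::real_vector \<Rightarrow> 'a \<Rightarrow> 'a) \<Rightarrow> ('a \<Rightarrow> 'a \<Rightarrow> real) \<Rightarrow> bool" where
  "invariant_form br B \<longleftrightarrow> bilinear B \<and> (\<forall>x y. B x y = B y x) \<and>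
     (\<forall>x y z. B (br x y) z = - B y (br x z))"

definition form_radical :: "('a \<Rightarrow> 'a \<Rightarrow> real) \<Rightarrow> 'a set" where
  "form_radical B = {x. \<forall>y. B x y = 0}"

text \<open>The underlying 6-dimensional real vector space is modelled by a type of class
  euclidean_space with DIM = 6 (its inner product plays no role).\<close>
definition butterfly ::
  "('a::euclidean_space \<Rightarrow> 'a \<Rightarrow> 'a) \<Rightarrow> ('a \<Rightarrow> 'a \<Rightarrow> real) \<Rightarrow> bool" where
  "butterfly br B \<longleftrightarrow> DIM('a) = 6 \<and> lie_bracket br \<and> two_step_nilpotent br \<and>
     invariant_form br B \<and> (\<exists>Z\<in>derived_alg br. Z \<notin> form_radical B)"

end

theory Submission
  imports Defs
begin

text \<open>By invariance, \<open>T(a,b,c) = B([a,b],c)\<close> is an alternating trilinear form, and it is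
  nonzero because some element of \<open>[g,g]\<close> lies outside the radical. Choosing \<open>T(X\<^sub>1,X\<^sub>2,X\<^sub>3) = 1\<close>
  and \<open>Z\<^sub>1 = [X\<^sub>2,X\<^sub>3]\<close>, \<open>Z\<^sub>2 = [X\<^sub>3,X\<^sub>1]\<close>, \<open>Z\<^sub>3 = [X\<^sub>1,X\<^sub>2]\<close> gives \<open>B(X\<^sub>i,Z\<^sub>j) = \<delta>\<^sub>i\<^sub>j\<close>; since \<open>[g,g]\<close> is
  central and \<open>B\<close>-isotropic, replacing \<open>X\<^sub>i\<close> by \<open>X\<^sub>i - \<Sum>\<^sub>j B(X\<^sub>i,X\<^sub>j)/2 Z\<^sub>j\<close> makes the \<open>X\<^sub>i\<close> isotropic
  without changing any bracket. The six vectors are \<open>B\<close>-dual to each other, hence a basis of the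
  6-dimensional space, and in every butterfly algebra they have the same brackets and the same
  Gram matrix. The linear map matching two such bases is the required isometric isomorphism.\<close>

lemma lie_bracket_bilinear: "lie_bracket br \<Longrightarrow> bilinear br"
  by (simp add: lie_bracket_def)

lemma lie_bracket_self [simp]: "lie_bracket br \<Longrightarrow> br x x = 0"
  by (simp add: lie_bracket_def)

lemma lie_bracket_anticomm:
  assumes "lie_bracket br"
  shows "br x y = - br y x"
proof -
  have "br (x + y) (x + y) = br x x + br x y + br y x + br y y"
    using lie_bracket_bilinear[OF assms] by (simp add: bilinear_ladd bilinear_radd)
  then show ?thesis using assms by (simp add: eq_neg_iff_add_eq_0 add.commute)
qed

lemma bracket_in_derived_alg: "br x y \<in> derived_alg br"
  unfolding derived_alg_def by (rule span_base) blast

lemma two_step_nilpotent_central: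
  "two_step_nilpotent br \<Longrightarrow> w \<in> derived_alg br \<Longrightarrow> br x w = 0"
  by (simp add: two_step_nilpotent_def)

lemma two_step_nilpotent_bracket_shift:
  assumes "lie_bracket br" "two_step_nilpotent br" "u \<in> derived_alg br" "v \<in> derived_alg br"
  shows "br (a + u) (b + v) = br a b"
proof -
  have bl: "bilinear br" using assms(1) by (rule lie_bracket_bilinear)
  have "br u c = 0" if "u \<in> derived_alg br" for u c
    using lie_bracket_anticomm[OF assms(1), of u c] two_step_nilpotent_central[OF assms(2) that] by simp
  with assms show ?thesis
    by (simp add: bilinear_ladd[OF bl] bilinear_radd[OF bl] two_step_nilpotent_central)
qed

lemma invariant_form_cyclic:
  assumes "lie_bracket br" "invariant_form br B"
  shows "B (br a b) c = B (br b c) a"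
  using assms lie_bracket_anticomm[OF assms(1), of b a] lie_bracket_anticomm[OF assms(1), of c b]
  unfolding invariant_form_def by (metis bilinear_lneg minus_minus)

lemma invariant_form_bracket_left:
  assumes "lie_bracket br" "invariant_form br B"
  shows "B (br a b) a = 0"
  using assms invariant_form_cyclic[OF assms, of a b a] unfolding invariant_form_def
  by (metis bilinear_lzero lie_bracket_self)

lemma invariant_form_bracket_right:
  assumes "lie_bracket br" "invariant_form br B"
  shows "B (br a b) b = 0"
  using invariant_form_cyclic[OF assms, of a b b] assms by (simp add: invariant_form_def bilinear_lzero)

lemma invariant_form_bracket_bracket:
  assumes "lie_bracket br" "invariant_form br B" "two_step_nilpotent br"
  shows "B (br a b) (br c d) = 0"
  using assms bracket_in_derived_alg[of br c d] unfolding invariant_form_def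
  by (metis bilinear_rzero neg_equal_0_iff_equal two_step_nilpotent_central)

lemma subspace_form_radical: "bilinear B \<Longrightarrow> subspace (form_radical B)"
  by (rule subspaceI) (simp_all add: form_radical_def bilinear_lzero bilinear_ladd bilinear_lmul)

lemma derived_alg_subset_form_radical:
  assumes "bilinear B" "\<And>u v w. B (br u v) w = 0"
  shows "derived_alg br \<subseteq> form_radical B"
  unfolding derived_alg_def
  by (rule span_minimal[OF _ subspace_form_radical[OF assms(1)]]) (auto simp: form_radical_def assms(2))

lemma bilinear_sum_left: "bilinear B \<Longrightarrow> B (\<Sum>i\<in>I. f i) y = (\<Sum>i\<in>I. B (f i) y)"
  using linear_sum[of "\<lambda>x. B x y" f I] by (simp add: bilinear_def o_def)

lemma bilinear_sum_right: "bilinear B \<Longrightarrow> B y (\<Sum>i\<in>I. f i) = (\<Sum>i\<in>I. B y (f i))"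
  using linear_sum[of "B y" f I] by (simp add: bilinear_def o_def)

lemma bilinear_compose_linear:
  "bilinear h \<Longrightarrow> linear f \<Longrightarrow> linear g \<Longrightarrow> bilinear (\<lambda>x y. h (f x) (g y))"
  unfolding bilinear_def by (auto intro: linear_compose[unfolded o_def])

lemma linear_compose_bilinear:
  "linear f \<Longrightarrow> bilinear h \<Longrightarrow> bilinear (\<lambda>x y. f (h x y))"
  unfolding bilinear_def by (auto intro: linear_compose[unfolded o_def])

lemma lagrangian_correction:
  fixes B :: "'a::real_vector \<Rightarrow> 'a \<Rightarrow> real" and x z :: "'i \<Rightarrow> 'a"
  assumes bB: "bilinear B" and sym: "\<And>u v. B u v = B v u" and "finite I"
    and xz: "\<And>i j. i \<in> I \<Longrightarrow> j \<in> I \<Longrightarrow> B (x i) (z j) = (if i = j then 1 else 0)"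
    and zz: "\<And>i j. i \<in> I \<Longrightarrow> j \<in> I \<Longrightarrow> B (z i) (z j) = 0"
    and "i \<in> I" "j \<in> I"
  defines "y \<equiv> \<lambda>k. x k - (\<Sum>l\<in>I. (B (x k) (x l) / 2) *\<^sub>R z l)"
  shows "B (y i) (y j) = 0" and "B (y i) (z j) = (if i = j then 1 else 0)"
proof -
  have zsum: "B (\<Sum>l\<in>I. c l *\<^sub>R z l) (z k) = 0" if "k \<in> I" for c k
    using zz that by (simp add: bilinear_sum_left[OF bB] bilinear_lmul[OF bB])
  have zsum2: "B (\<Sum>l\<in>I. c l *\<^sub>R z l) (\<Sum>l\<in>I. d l *\<^sub>R z l) = 0" for c d
    using zsum by (simp add: bilinear_sum_right[OF bB] bilinear_rmul[OF bB])
  have xsum: "B (x k) (\<Sum>l\<in>I. c l *\<^sub>R z l) = c k" if "k \<in> I" for c k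
  proof -
    have "B (x k) (\<Sum>l\<in>I. c l *\<^sub>R z l) = (\<Sum>l\<in>I. if k = l then c l else 0)"
      using xz that by (auto simp: bilinear_sum_right[OF bB] bilinear_rmul[OF bB] intro!: sum.cong)
    then show ?thesis using that \<open>finite I\<close> by simp
  qed
  show "B (y i) (z j) = (if i = j then 1 else 0)"
    using xz[OF \<open>i \<in> I\<close> \<open>j \<in> I\<close>] zsum[OF \<open>j \<in> I\<close>] by (simp add: y_def bilinear_lsub[OF bB])
  show "B (y i) (y j) = 0"
    using xsum[OF \<open>i \<in> I\<close>] xsum[OF \<open>j \<in> I\<close>] sym
    by (simp add: y_def bilinear_lsub[OF bB] bilinear_rsub[OF bB] zsum2)
qed

lemma dual_family_independent:
  fixes B :: "'a::real_vector \<Rightarrow> 'a \<Rightarrow> real" and e e' :: "'i \<Rightarrow> 'a"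
  assumes bB: "bilinear B"
    and dual: "\<And>i j. i \<in> I \<Longrightarrow> j \<in> I \<Longrightarrow> B (e i) (e' j) = (if i = j then 1 else 0)"
  shows "inj_on e I" and "independent (e ` I)"
proof -
  show inj: "inj_on e I"
  proof (rule inj_onI)
    fix i j assume "i \<in> I" "j \<in> I" "e i = e j"
    have "1 = B (e i) (e' i)" using dual[OF \<open>i \<in> I\<close> \<open>i \<in> I\<close>] by simp
    also have "\<dots> = (if j = i then 1 else 0)"
      using \<open>e i = e j\<close> dual[OF \<open>j \<in> I\<close> \<open>i \<in> I\<close>] by simp
    finally show "i = j" by (simp split: if_splits)
  qed
  show "independent (e ` I)"
  proof
    assume "dependent (e ` I)"
    then obtain t c v where t: "finite t" "t \<subseteq> e ` I" and sum: "(\<Sum>u\<in>t. c u *\<^sub>R u) = 0"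
      and v: "v \<in> t" "c v \<noteq> 0"
      unfolding dependent_explicit by blast
    obtain j where j: "j \<in> I" "v = e j" using t v by blast
    have "(\<Sum>u\<in>t. c u * B u (e' j)) = (\<Sum>u\<in>t. if u = v then c u else 0)"
    proof (rule sum.cong)
      fix u assume "u \<in> t"
      then obtain i where i: "i \<in> I" "u = e i" using t by blast
      then show "c u * B u (e' j) = (if u = v then c u else 0)"
        by (simp add: j(2) dual[OF i(1) j(1)] inj_on_eq_iff[OF inj i(1) j(1)])
    qed simp
    also have "\<dots> = c v" using t v by simp
    finally have "B (\<Sum>u\<in>t. c u *\<^sub>R u) (e' j) = c v"
      by (simp add: bilinear_sum_left[OF bB] bilinear_lmul[OF bB])
    then show False using sum v bilinear_lzero[OF bB] by simp
  qed
qed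

lemma linear_iso_between_bases:
  fixes e :: "'i \<Rightarrow> 'a::real_vector" and d :: "'i \<Rightarrow> 'b::real_vector"
  assumes "inj_on e I" "independent (e ` I)" "span (e ` I) = UNIV"
    and "inj_on d I" "independent (d ` I)" "span (d ` I) = UNIV"
  shows "\<exists>f. linear f \<and> bij f \<and> (\<forall>i\<in>I. f (e i) = d i)"
proof -
  obtain f where f: "linear f" "\<forall>u\<in>e ` I. f u = d (inv_into I e u)"
    using linear_independent_extend[OF assms(2), of "\<lambda>u. d (inv_into I e u)"] by blast
  obtain g where g: "linear g" "\<forall>u\<in>d ` I. g u = e (inv_into I d u)"
    using linear_independent_extend[OF assms(5), of "\<lambda>u. e (inv_into I d u)"] by blast
  have fe: "f (e i) = d i" and gd: "g (d i) = e i" if "i \<in> I" for i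
    using f g that assms(1,4) by (simp_all add: inv_into_f_f)
  have "g \<circ> f = id"
    by (rule ext, rule linear_eq_on_span[OF linear_compose[OF f(1) g(1)] linear_id, of "e ` I"])
      (auto simp: assms(3) fe gd)
  moreover have "f \<circ> g = id"
    by (rule ext, rule linear_eq_on_span[OF linear_compose[OF g(1) f(1)] linear_id, of "d ` I"])
      (auto simp: assms(6) fe gd)
  ultimately have "bij f" by (rule o_bij)
  with f(1) fe show ?thesis by blast
qed

text \<open>The normal-form basis \<open>X\<^sub>1, X\<^sub>2, X\<^sub>3, Z\<^sub>1, Z\<^sub>2, Z\<^sub>3\<close>, as \<open>x 0, x 1, x 2, z 0, z 1, z 2\<close>.\<close>

definition butterfly_frame ::
  "('a::real_vector \<Rightarrow> 'a \<Rightarrow> 'a) \<Rightarrow> ('a \<Rightarrow> 'a \<Rightarrow> real) \<Rightarrow> (nat \<Rightarrow> 'a) \<Rightarrow> (nat \<Rightarrow> 'a) \<Rightarrow> bool"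
where
  "butterfly_frame br B x z \<longleftrightarrow>
     br (x 0) (x 1) = z 2 \<and> br (x 1) (x 2) = z 0 \<and> br (x 2) (x 0) = z 1 \<and>
     (\<forall>u. \<forall>k<3. br u (z k) = 0) \<and>
     (\<forall>i<3. \<forall>j<3. B (x i) (x j) = 0 \<and> B (z i) (z j) = 0 \<and>
        B (x i) (z j) = (if i = j then 1 else 0))"

lemma less_3_cases: "(i::nat) < 3 \<Longrightarrow> i = 0 \<or> i = 1 \<or> i = 2"
  by arith

lemma butterfly_frame_of_dual_triple:
  assumes lie: "lie_bracket br" and nil: "two_step_nilpotent br" and inv: "invariant_form br B"
    and br_x: "br (x 0) (x 1) = z 2" "br (x 1) (x 2) = z 0" "br (x 2) (x 0) = z 1"
    and z_derived: "\<And>k. k < 3 \<Longrightarrow> z k \<in> derived_alg br"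
    and xz: "\<And>i j. i < 3 \<Longrightarrow> j < 3 \<Longrightarrow> B (x i) (z j) = (if i = j then 1 else 0)"
    and zz: "\<And>i j. i < 3 \<Longrightarrow> j < 3 \<Longrightarrow> B (z i) (z j) = 0"
  shows "\<exists>y. butterfly_frame br B y z"
proof -
  have bB: "bilinear B" and sym: "\<And>u v. B u v = B v u"
    using inv unfolding invariant_form_def by blast+
  define y where "y k = x k - (\<Sum>l<3. (B (x k) (x l) / 2) *\<^sub>R z l)" for k
  have "subspace (derived_alg br)"
    by (simp add: derived_alg_def subspace_span)
  then have "- (\<Sum>l<3. (B (x k) (x l) / 2) *\<^sub>R z l) \<in> derived_alg br" for k
    by (intro subspace_neg subspace_sum subspace_scale z_derived) auto
  then have br_y: "br (y i) (y j) = br (x i) (x j)" for i j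
    unfolding y_def diff_conv_add_uminus by (intro two_step_nilpotent_bracket_shift lie nil)
  have yy: "B (y i) (y j) = 0" and yz: "B (y i) (z j) = (if i = j then 1 else 0)"
    if "i < 3" "j < 3" for i j
    using lagrangian_correction[OF bB sym, of "{..<3}" x z i j] xz zz that by (simp_all add: y_def)
  have "butterfly_frame br B y z"
    unfolding butterfly_frame_def
    using two_step_nilpotent_central[OF nil z_derived] br_x by (simp add: br_y yy yz zz)
  then show ?thesis by blast
qed

lemma butterfly_frame_of_triple:
  assumes lie: "lie_bracket br" and nil: "two_step_nilpotent br" and inv: "invariant_form br B"
    and abc: "B (br a b) c = 1"
  shows "\<exists>x z. butterfly_frame br B x z"
proof -
  define x where "x = (!) [a, b, c]"
  define z where "z = (!) [br b c, br c a, br a b]"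
  \<comment> \<open>\<open>B([_,_],_)\<close> is alternating and cyclic, so \<open>z\<close> is \<open>B\<close>-dual to \<open>x\<close>.\<close>
  have bca: "B (br b c) a = 1" and cab: "B (br c a) b = 1"
    using abc invariant_form_cyclic[OF lie inv, of a b c] invariant_form_cyclic[OF lie inv, of b c a]
    by simp_all
  have "B (x i) (z j) = (if i = j then 1 else 0)" if "i < 3" "j < 3" for i j
  proof -
    have "B (z j) (x i) = (if i = j then 1 else 0)"
      using less_3_cases[OF that(1)] less_3_cases[OF that(2)] abc bca cab
      by (auto simp: x_def z_def invariant_form_bracket_left[OF lie inv]
          invariant_form_bracket_right[OF lie inv])
    then show ?thesis using inv by (simp add: invariant_form_def)
  qed
  moreover have "B (z i) (z j) = 0" if "i < 3" "j < 3" for i j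
    using less_3_cases[OF that(1)] less_3_cases[OF that(2)]
    by (auto simp: z_def invariant_form_bracket_bracket[OF lie inv nil])
  moreover have "z k \<in> derived_alg br" if "k < 3" for k
    using less_3_cases[OF that] by (auto simp: z_def bracket_in_derived_alg)
  moreover have "br (x 0) (x 1) = z 2" "br (x 1) (x 2) = z 0" "br (x 2) (x 0) = z 1"
    by (simp_all add: x_def z_def)
  ultimately show ?thesis
    using butterfly_frame_of_dual_triple[OF lie nil inv] by blast
qed

lemma butterfly_frame_exists:
  assumes "butterfly br B"
  shows "\<exists>x z. butterfly_frame br B x z"
proof -
  have lie: "lie_bracket br" and nil: "two_step_nilpotent br" and inv: "invariant_form br B"
    and not_radical: "\<not> derived_alg br \<subseteq> form_radical B"
    using assms unfolding butterfly_def by blast+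
  have bB: "bilinear B" using inv unfolding invariant_form_def by blast
  have "\<exists>a b w. B (br a b) w \<noteq> 0"
  proof (rule ccontr)
    assume "\<nexists>a b w. B (br a b) w \<noteq> 0"
    then have "derived_alg br \<subseteq> form_radical B"
      by (intro derived_alg_subset_form_radical[OF bB]) blast
    with not_radical show False ..
  qed
  then obtain a b w where t: "B (br a b) w \<noteq> 0" by blast
  have "B (br a b) ((1 / B (br a b) w) *\<^sub>R w) = 1"
    using t by (simp add: bilinear_rmul[OF bB])
  then show ?thesis by (rule butterfly_frame_of_triple[OF lie nil inv])
qed

lemma butterfly_frame_formD:
  assumes "butterfly_frame br B x z" "i < 3" "j < 3"
  shows "B (x i) (x j) = 0" "B (z i) (z j) = 0" "B (x i) (z j) = (if i = j then 1 else 0)"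
  using assms by (simp_all add: butterfly_frame_def)

lemma butterfly_frame_brackets:
  assumes frame: "butterfly_frame br B x z" and lie: "lie_bracket br"
  shows "br (x 0) (x 1) = z 2" "br (x 1) (x 2) = z 0" "br (x 2) (x 0) = z 1"
    and "br (x 1) (x 0) = - z 2" "br (x 2) (x 1) = - z 0" "br (x 0) (x 2) = - z 1"
    and "k < 3 \<Longrightarrow> br u (z k) = 0" "k < 3 \<Longrightarrow> br (z k) u = 0"
proof -
  show br: "br (x 0) (x 1) = z 2" "br (x 1) (x 2) = z 0" "br (x 2) (x 0) = z 1"
    using frame unfolding butterfly_frame_def by blast+
  show "br (x 1) (x 0) = - z 2" "br (x 2) (x 1) = - z 0" "br (x 0) (x 2) = - z 1"
    by (simp_all only: lie_bracket_anticomm[OF lie, of "x 1" "x 0"]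
        lie_bracket_anticomm[OF lie, of "x 2" "x 1"] lie_bracket_anticomm[OF lie, of "x 0" "x 2"] br)
  show central: "br u (z k) = 0" if "k < 3"
    using frame that unfolding butterfly_frame_def by blast
  show "br (z k) u = 0" if "k < 3"
    using central[OF that] lie_bracket_anticomm[OF lie, of "z k" u] by simp
qed

lemma butterfly_frame_basis:
  fixes x z :: "nat \<Rightarrow> 'a::euclidean_space"
  assumes frame: "butterfly_frame br B x z" and bB: "bilinear B" and sym: "\<And>u v. B u v = B v u"
    and dim: "DIM('a) = 6"
  shows "inj_on (case_sum x z) ({..<3} <+> {..<3})"
    and "independent (case_sum x z ` ({..<3} <+> {..<3}))"
    and "span (case_sum x z ` ({..<3} <+> {..<3})) = UNIV"
proof -
  let ?I = "{..<3::nat} <+> {..<3::nat}"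
  have "B (case_sum x z a) (case_sum z x b) = (if a = b then 1 else 0)" if "a \<in> ?I" "b \<in> ?I" for a b
    using that butterfly_frame_formD[OF frame] sym by (cases a; cases b) auto
  note dual = dual_family_independent[OF bB this]
  show inj: "inj_on (case_sum x z) ?I" by (rule dual(1))
  show ind: "independent (case_sum x z ` ?I)" by (rule dual(2))
  have "card (case_sum x z ` ?I) = DIM('a)"
    using card_image[OF inj] dim by (simp add: card_Plus)
  then have "UNIV \<subseteq> span (case_sum x z ` ?I)"
    using card_ge_dim_independent[OF subset_UNIV ind] by (simp add: dim_UNIV)
  then show "span (case_sum x z ` ?I) = UNIV" by blast
qed

lemma butterfly_frame_span:
  fixes x z :: "nat \<Rightarrow> 'a::euclidean_space"
  assumes "butterfly_frame br B x z" "bilinear B" "\<And>u v. B u v = B v u" "DIM('a) = 6"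
  shows "span (x ` {..<3} \<union> z ` {..<3}) = UNIV"
  using butterfly_frame_basis(3)[OF assms] by (simp add: image_Un Plus_def image_image)

lemma butterfly_frames_linear_iso:
  fixes x z :: "nat \<Rightarrow> 'a::euclidean_space" and x' z' :: "nat \<Rightarrow> 'b::euclidean_space"
  assumes "butterfly_frame br B x z" "bilinear B" "\<And>u v. B u v = B v u" "DIM('a) = 6"
    and "butterfly_frame br' B' x' z'" "bilinear B'" "\<And>u v. B' u v = B' v u" "DIM('b) = 6"
  shows "\<exists>f. linear f \<and> bij f \<and> (\<forall>i<3. f (x i) = x' i \<and> f (z i) = z' i)"
proof -
  obtain f where f: "linear f" "bij f"
    and f_basis: "\<forall>a\<in>{..<3} <+> {..<3}. f (case_sum x z a) = case_sum x' z' a"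
    using linear_iso_between_bases[OF butterfly_frame_basis[OF assms(1-4)]
        butterfly_frame_basis[OF assms(5-8)]] by blast
  have "f (x i) = x' i \<and> f (z i) = z' i" if "i < 3" for i
    using bspec[OF f_basis, of "Inl i"] bspec[OF f_basis, of "Inr i"] that by auto
  with f show ?thesis by blast
qed

lemma butterfly_frame_form_transfer:
  assumes F: "butterfly_frame br B x z" and F': "butterfly_frame br' B' x' z'"
    and sym: "\<And>u v. B u v = B v u" and sym': "\<And>u v. B' u v = B' v u"
    and f: "\<And>i. i < 3 \<Longrightarrow> f (x i) = x' i \<and> f (z i) = z' i"
    and "u \<in> x ` {..<3} \<union> z ` {..<3}" "v \<in> x ` {..<3} \<union> z ` {..<3}"
  shows "B' (f u) (f v) = B u v"
  using assms(6,7) f sym sym' butterfly_frame_formD[OF F] butterfly_frame_formD[OF F'] by auto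

lemma butterfly_frame_bracket_transfer:
  assumes F: "butterfly_frame br B x z" and F': "butterfly_frame br' B' x' z'"
    and lie: "lie_bracket br" and lie': "lie_bracket br'"
    and f: "linear f" "\<And>i. i < 3 \<Longrightarrow> f (x i) = x' i \<and> f (z i) = z' i"
    and "u \<in> x ` {..<3} \<union> z ` {..<3}" "v \<in> x ` {..<3} \<union> z ` {..<3}"
  shows "f (br u v) = br' (f u) (f v)"
proof -
  have "f (br (x i) (x j)) = br' (x' i) (x' j)" if "i < 3" "j < 3" for i j
    using less_3_cases[OF that(1)] less_3_cases[OF that(2)]
      butterfly_frame_brackets(1-6)[OF F lie] butterfly_frame_brackets(1-6)[OF F' lie'] f lie lie'
    by (auto simp: linear_neg linear_0)
  then show ?thesis
    using assms(7,8) f butterfly_frame_brackets(7,8)[OF F lie] butterfly_frame_brackets(7,8)[OF F' lie']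
      linear_0[OF f(1)]
    by auto
qed

theorem corollary5p4:
  fixes br1 :: "'a::euclidean_space \<Rightarrow> 'a \<Rightarrow> 'a" and B1 :: "'a \<Rightarrow> 'a \<Rightarrow> real"
    and br2 :: "'b::euclidean_space \<Rightarrow> 'b \<Rightarrow> 'b" and B2 :: "'b \<Rightarrow> 'b \<Rightarrow> real"
  assumes "butterfly br1 B1" and "butterfly br2 B2"
  shows "\<exists>f :: 'a \<Rightarrow> 'b. linear f \<and> bij f \<and>
           (\<forall>x y. f (br1 x y) = br2 (f x) (f y)) \<and>
           (\<forall>x y. B2 (f x) (f y) = B1 x y)"
proof -
  have lie1: "lie_bracket br1" and inv1: "invariant_form br1 B1" and dim1: "DIM('a) = 6"
    and lie2: "lie_bracket br2" and inv2: "invariant_form br2 B2" and dim2: "DIM('b) = 6"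
    using assms unfolding butterfly_def by blast+
  have bB1: "bilinear B1" and sym1: "\<And>u v. B1 u v = B1 v u"
    and bB2: "bilinear B2" and sym2: "\<And>u v. B2 u v = B2 v u"
    using inv1 inv2 unfolding invariant_form_def by blast+
  obtain x1 z1 where F1: "butterfly_frame br1 B1 x1 z1" using butterfly_frame_exists[OF assms(1)] by blast
  obtain x2 z2 where F2: "butterfly_frame br2 B2 x2 z2" using butterfly_frame_exists[OF assms(2)] by blast
  obtain f where f: "linear f" "bij f" and fxz: "\<And>i. i < 3 \<Longrightarrow> f (x1 i) = x2 i \<and> f (z1 i) = z2 i"
    using butterfly_frames_linear_iso[OF F1 bB1 sym1 dim1 F2 bB2 sym2 dim2] by blast
  have span1: "UNIV \<subseteq> span (x1 ` {..<3} \<union> z1 ` {..<3})"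
    by (simp add: butterfly_frame_span[OF F1 bB1 sym1 dim1])
  have "f (br1 u v) = br2 (f u) (f v)" for u v
    by (rule bilinear_eq[OF linear_compose_bilinear[OF f(1) lie_bracket_bilinear[OF lie1]]
          bilinear_compose_linear[OF lie_bracket_bilinear[OF lie2] f(1) f(1)] span1 span1 UNIV_I UNIV_I])
      (rule butterfly_frame_bracket_transfer[OF F1 F2 lie1 lie2 f(1) fxz])
  moreover have "B2 (f u) (f v) = B1 u v" for u v
    by (rule bilinear_eq[OF bilinear_compose_linear[OF bB2 f(1) f(1)] bB1 span1 span1 UNIV_I UNIV_I])
      (rule butterfly_frame_form_transfer[OF F1 F2 sym1 sym2 fxz])
  ultimately show ?thesis using f by blast
qed

end
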